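(* Let $N\ge 1$ and let $\Sigma_N^{+}$ be the space of sequences $(x_n)_{n\in\mathbb{N}}$ with $x_n\in\{1,\dots,N\}$, with metric $d(x,y)=2^{-\min\{i:x_i\neq y_i\}}$. For $1\le i\le N$ let $W_i=\{x\in\Sigma_N^+: x_1=i\}$. Let $T:\Sigma_N^+\to\Sigma_N^+$ be a continuous surjection such that for every $1\le i\le N$ there exists $x^i\in W_i$ with $T(x^i)\in W_i$. Then there exists a continuous surjection $\widetilde T:\Sigma_N^+\to\Sigma_N^+$ such that for every $x\in\Sigma_N^+$ and every $i$, $\widetilde T(x)\in W_i$ if and only if $T(x)\in W_i$, and the orbit of every point under $\widetilde T$ is finally periodic.
   Context: The orbit of $x$ under a map $S$ is finally periodic if there exist integers $j,M>0$ with $S^{M+j}(x)=S^{j}(x)$. *)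

theory Defs
  imports Complex_Main
begin

text \<open>One-sided full shift on N symbols. Coordinates are indexed from 0:
  position n of the Isabelle sequence is the paper's coordinate x_(n+1).\<close>

definition sigma :: "nat \<Rightarrow> (nat \<Rightarrow> nat) set" where
  "sigma N = {x. \<forall>n. x n \<in> {1..N}}"

text \<open>d(x,y) = 2^(-min{i : x_i ~= y_i}) with paper indices starting at 1.\<close>
definition shift_dist :: "(nat \<Rightarrow> nat) \<Rightarrow> (nat \<Rightarrow> nat) \<Rightarrow> real" where
  "shift_dist x y = (if x = y then 0 else (1/2) ^ Suc (LEAST i. x i \<noteq> y i))"

definition cyl :: "nat \<Rightarrow> nat \<Rightarrow> (nat \<Rightarrow> nat) set" where
  "cyl N i = {x \<in> sigma N. x 0 = i}"

definition shift_continuous :: "nat \<Rightarrow> ((nat \<Rightarrow> nat) \<Rightarrow> (nat \<Rightarrow> nat)) \<Rightarrow> bool" where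
  "shift_continuous N T = (\<forall>x\<in>sigma N. \<forall>e>0. \<exists>\<delta>>0. \<forall>y\<in>sigma N.
      shift_dist x y < \<delta> \<longrightarrow> shift_dist (T x) (T y) < e)"

definition finally_periodic :: "('a \<Rightarrow> 'a) \<Rightarrow> 'a \<Rightarrow> bool" where
  "finally_periodic S x = (\<exists>j M. j > 0 \<and> M > 0 \<and> (S ^^ (M + j)) x = (S ^^ j) x)"

end

theory Submission
  imports Defs
begin

text \<open>By continuity of T at the points x^i, there is a K such that every point whose first
  K+1 symbols agree with those of z_i := x^i, i = x_0, is mapped by T into W_i. Let U be the
  set of such points. The new map keeps the first symbol and deletes the next K symbols on U,
  and outside U sends x to the periodic point i(z_i(1)...z_i(K))^\<infinity>, i = T(x)_0, which
  it fixes. Both choices preserve the first symbol of T(x). An orbit either leaves U and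
  then lands on a fixed point, or stays in U forever, which forces x itself to be the
  periodic point for x_0.\<close>

lemma shift_dist_less_iff: "shift_dist x y < (1/2) ^ n \<longleftrightarrow> (\<forall>k<n. x k = y k)"
proof (cases "x = y")
  case False
  define L where "L = (LEAST i. x i \<noteq> y i)"
  obtain i where "x i \<noteq> y i"
    using False by blast
  then have "x L \<noteq> y L"
    unfolding L_def by (rule LeastI)
  moreover have "\<And>k. k < L \<Longrightarrow> x k = y k"
    unfolding L_def using not_less_Least by blast
  ultimately have prefix: "n < Suc L \<longleftrightarrow> (\<forall>k<n. x k = y k)"
    by (meson leI less_Suc_eq_le less_le_trans)
  have dist: "shift_dist x y = (1/2) ^ Suc L"
    using False by (simp add: shift_dist_def L_def)
  have "(1/2::real) ^ Suc L < (1/2) ^ n \<longleftrightarrow> n < Suc L"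
    by (rule power_strict_decreasing_iff) auto
  then show ?thesis
    by (simp only: dist prefix)
qed (simp add: shift_dist_def)

lemma shift_continuous_iff_prefix:
  "shift_continuous N T \<longleftrightarrow>
    (\<forall>x\<in>sigma N. \<forall>m. \<exists>n. \<forall>y\<in>sigma N. (\<forall>k<n. x k = y k) \<longrightarrow> (\<forall>k<m. T x k = T y k))"
proof
  assume cont: "shift_continuous N T"
  show "\<forall>x\<in>sigma N. \<forall>m. \<exists>n. \<forall>y\<in>sigma N. (\<forall>k<n. x k = y k) \<longrightarrow> (\<forall>k<m. T x k = T y k)"
  proof (intro ballI allI)
    fix x m assume "x \<in> sigma N"
    moreover have "(0::real) < (1/2) ^ m"
      by simp
    ultimately obtain d where "d > 0"
      and d: "\<And>y. y \<in> sigma N \<Longrightarrow> shift_dist x y < d \<Longrightarrow> shift_dist (T x) (T y) < (1/2) ^ m"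
      using cont unfolding shift_continuous_def by blast
    obtain n where n: "(1/2::real) ^ n < d"
      using real_arch_pow_inv[OF \<open>d > 0\<close>, of "1/2"] by auto
    have "\<forall>k<m. T x k = T y k" if "y \<in> sigma N" "\<forall>k<n. x k = y k" for y
    proof -
      have "shift_dist x y < (1/2) ^ n"
        using that(2) by (rule shift_dist_less_iff[THEN iffD2])
      then have "shift_dist (T x) (T y) < (1/2) ^ m"
        using n d[OF that(1)] by linarith
      then show ?thesis
        by (rule shift_dist_less_iff[THEN iffD1])
    qed
    then show "\<exists>n. \<forall>y\<in>sigma N. (\<forall>k<n. x k = y k) \<longrightarrow> (\<forall>k<m. T x k = T y k)"
      by blast
  qed
next
  assume prefix: "\<forall>x\<in>sigma N. \<forall>m. \<exists>n. \<forall>y\<in>sigma N. (\<forall>k<n. x k = y k) \<longrightarrow> (\<forall>k<m. T x k = T y k)"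
  show "shift_continuous N T"
    unfolding shift_continuous_def
  proof (intro ballI allI impI)
    fix x and e :: real assume "x \<in> sigma N" "e > 0"
    obtain m where m: "(1/2::real) ^ m < e"
      using real_arch_pow_inv[OF \<open>e > 0\<close>, of "1/2"] by auto
    obtain n where n: "\<forall>y\<in>sigma N. (\<forall>k<n. x k = y k) \<longrightarrow> (\<forall>k<m. T x k = T y k)"
      using prefix \<open>x \<in> sigma N\<close> by blast
    have "shift_dist (T x) (T y) < e" if "y \<in> sigma N" "shift_dist x y < (1/2) ^ n" for y
    proof -
      have "\<forall>k<m. T x k = T y k"
        using n that(1) shift_dist_less_iff[THEN iffD1, OF that(2)] by blast
      then have "shift_dist (T x) (T y) < (1/2) ^ m"
        by (rule shift_dist_less_iff[THEN iffD2])
      then show ?thesis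
        using m by linarith
    qed
    then show "\<exists>\<delta>>0. \<forall>y\<in>sigma N. shift_dist x y < \<delta> \<longrightarrow> shift_dist (T x) (T y) < e"
      by (intro exI[of _ "(1/2) ^ n"]) simp
  qed
qed

definition matches_pattern :: "(nat \<Rightarrow> nat \<Rightarrow> nat) \<Rightarrow> nat \<Rightarrow> (nat \<Rightarrow> nat) \<Rightarrow> bool" where
  "matches_pattern z K x \<longleftrightarrow> (\<forall>n\<le>K. x n = z (x 0) n)"

definition pattern_point :: "(nat \<Rightarrow> nat \<Rightarrow> nat) \<Rightarrow> nat \<Rightarrow> nat \<Rightarrow> nat \<Rightarrow> nat" where
  "pattern_point z K i = (\<lambda>n. if n = 0 then i else z i ((n - 1) mod K + 1))"

definition drop_block :: "nat \<Rightarrow> (nat \<Rightarrow> nat) \<Rightarrow> nat \<Rightarrow> nat" where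
  "drop_block K x = (\<lambda>n. if n = 0 then x 0 else x (n + K))"

definition pattern_map ::
    "((nat \<Rightarrow> nat) \<Rightarrow> nat \<Rightarrow> nat) \<Rightarrow> (nat \<Rightarrow> nat \<Rightarrow> nat) \<Rightarrow> nat \<Rightarrow> (nat \<Rightarrow> nat) \<Rightarrow> nat \<Rightarrow> nat" where
  "pattern_map T z K x =
    (if matches_pattern z K x then drop_block K x else pattern_point z K (T x 0))"

lemma drop_block_iterate: "(drop_block K ^^ q) x = (\<lambda>n. if n = 0 then x 0 else x (n + q * K))"
  by (induction q) (auto simp: drop_block_def add.assoc)

lemma matches_pattern_pattern_point:
  assumes "K > 0" "z i 0 = i"
  shows "matches_pattern z K (pattern_point z K i)"
  using assms unfolding matches_pattern_def pattern_point_def by auto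

lemma drop_block_pattern_point:
  assumes "K > 0"
  shows "drop_block K (pattern_point z K i) = pattern_point z K i"
proof -
  have "(n + K - 1) mod K = (n - 1) mod K" if "n > 0" for n
  proof -
    have "n + K - 1 = (n - 1) + K"
      using that by simp
    then show ?thesis
      by simp
  qed
  then show ?thesis
    unfolding drop_block_def pattern_point_def using assms by auto
qed

lemma pattern_map_pattern_point:
  assumes "K > 0" "z i 0 = i"
  shows "pattern_map T z K (pattern_point z K i) = pattern_point z K i"
  using assms by (simp add: pattern_map_def matches_pattern_pattern_point drop_block_pattern_point)

lemma pattern_point_if_all_blocks_match:
  assumes "K > 0" and "\<forall>q. matches_pattern z K ((drop_block K ^^ q) x)"
  shows "x = pattern_point z K (x 0)"
proof
  fix n
  show "x n = pattern_point z K (x 0) n"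
  proof (cases n)
    case (Suc m)
    have "Suc (m mod K) \<le> K"
      using \<open>K > 0\<close> by (simp add: Suc_leI)
    then have "x (Suc (m mod K) + m div K * K) = z (x 0) (Suc (m mod K))"
      using assms(2)[rule_format, of "m div K"]
      unfolding matches_pattern_def drop_block_iterate by auto
    then show ?thesis
      using Suc by (simp add: pattern_point_def)
  qed (simp add: pattern_point_def)
qed

lemma pattern_map_iterate_eq_drop_block:
  assumes "\<forall>k. matches_pattern z K ((pattern_map T z K ^^ k) x)"
  shows "(pattern_map T z K ^^ k) x = (drop_block K ^^ k) x"
proof (induction k)
  case (Suc k)
  have "matches_pattern z K ((pattern_map T z K ^^ k) x)"
    using assms ..
  then show ?case
    using Suc.IH by (simp add: pattern_map_def)
qed simp

lemma finally_periodic_if_reaches_fixed_point: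
  assumes "S ((S ^^ k) x) = (S ^^ k) x"
  shows "finally_periodic S x"
  unfolding finally_periodic_def
proof (intro exI conjI)
  show "(S ^^ (1 + Suc k)) x = (S ^^ Suc k) x"
    using assms by simp
qed auto

lemma pattern_map_finally_periodic:
  assumes "K > 0" and "\<And>i. z i 0 = i"
  shows "finally_periodic (pattern_map T z K) x"
proof (cases "\<forall>k. matches_pattern z K ((pattern_map T z K ^^ k) x)")
  case True
  then have "x = pattern_point z K (x 0)"
    using assms(1) pattern_point_if_all_blocks_match pattern_map_iterate_eq_drop_block by metis
  then have "pattern_map T z K ((pattern_map T z K ^^ 0) x) = (pattern_map T z K ^^ 0) x"
    using pattern_map_pattern_point assms by (metis funpow_0)
  then show ?thesis
    by (rule finally_periodic_if_reaches_fixed_point)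
next
  case False
  then obtain k where "\<not> matches_pattern z K ((pattern_map T z K ^^ k) x)"
    by blast
  then have "(pattern_map T z K ^^ Suc k) x = pattern_point z K (T ((pattern_map T z K ^^ k) x) 0)"
    by (simp add: pattern_map_def)
  then have "pattern_map T z K ((pattern_map T z K ^^ Suc k) x) = (pattern_map T z K ^^ Suc k) x"
    using pattern_map_pattern_point assms by metis
  then show ?thesis
    by (rule finally_periodic_if_reaches_fixed_point)
qed

lemma pattern_point_in_sigma:
  assumes "i \<in> {1..N}" "z i \<in> sigma N"
  shows "pattern_point z K i \<in> sigma N"
  using assms unfolding sigma_def pattern_point_def by auto

lemma pattern_map_in_sigma:
  assumes "x \<in> sigma N" "T x \<in> sigma N" and "\<And>i. i \<in> {1..N} \<Longrightarrow> z i \<in> sigma N"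
  shows "pattern_map T z K x \<in> sigma N"
proof (cases "matches_pattern z K x")
  case True
  then show ?thesis
    using assms(1) by (simp add: pattern_map_def drop_block_def sigma_def)
next
  case False
  have "T x 0 \<in> {1..N}"
    using assms(2) unfolding sigma_def by blast
  then show ?thesis
    using False assms(3) pattern_point_in_sigma by (simp add: pattern_map_def)
qed

lemma pattern_map_first_symbol:
  assumes "\<And>y. y \<in> sigma N \<Longrightarrow> matches_pattern z K y \<Longrightarrow> T y 0 = y 0" and "x \<in> sigma N"
  shows "pattern_map T z K x 0 = T x 0"
  using assms by (simp add: pattern_map_def drop_block_def pattern_point_def)

lemma sigma_subset_pattern_map_image:
  assumes "K > 0" and "\<And>i. z i 0 = i" and "\<And>i. i \<in> {1..N} \<Longrightarrow> z i \<in> sigma N"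
  shows "sigma N \<subseteq> pattern_map T z K ` sigma N"
proof
  fix y assume y: "y \<in> sigma N"
  then have "y 0 \<in> {1..N}"
    unfolding sigma_def by blast
  define x where "x = (\<lambda>n. if n \<le> K then z (y 0) n else y (n - K))"
  have "x \<in> sigma N"
    using y assms(3)[OF \<open>y 0 \<in> {1..N}\<close>] unfolding x_def sigma_def by auto
  moreover have "matches_pattern z K x"
    using assms(2) unfolding matches_pattern_def x_def by simp
  then have "pattern_map T z K x = y"
    using assms(1,2) by (auto simp: pattern_map_def drop_block_def x_def)
  ultimately show "y \<in> pattern_map T z K ` sigma N"
    by blast
qed

lemma pattern_map_continuous:
  assumes "shift_continuous N T"
  shows "shift_continuous N (pattern_map T z K)"
  unfolding shift_continuous_iff_prefix
proof (intro ballI allI)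
  fix x m assume "x \<in> sigma N"
  then obtain n where n: "\<forall>y\<in>sigma N. (\<forall>k<n. x k = y k) \<longrightarrow> (\<forall>k<1. T x k = T y k)"
    using assms unfolding shift_continuous_iff_prefix by blast
  have "\<forall>k<m. pattern_map T z K x k = pattern_map T z K y k"
    if "y \<in> sigma N" "\<forall>k < Suc (m + K) + n. x k = y k" for y
  proof -
    have "T x 0 = T y 0"
      using n that by simp
    moreover have "matches_pattern z K x \<longleftrightarrow> matches_pattern z K y"
      using that(2) unfolding matches_pattern_def by auto
    ultimately show ?thesis
      using that(2) by (auto simp: pattern_map_def drop_block_def)
  qed
  then show "\<exists>n. \<forall>y\<in>sigma N. (\<forall>k<n. x k = y k) \<longrightarrow>
      (\<forall>k<m. pattern_map T z K x k = pattern_map T z K y k)"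
    by blast
qed

lemma exists_pattern_length:
  assumes "shift_continuous N T"
    and "\<And>i. i \<in> {1..N} \<Longrightarrow> z i \<in> sigma N \<and> z i 0 = i \<and> T (z i) 0 = i"
  shows "\<exists>K>0. \<forall>y\<in>sigma N. matches_pattern z K y \<longrightarrow> T y 0 = y 0"
proof -
  have "\<forall>i\<in>{1..N}. \<exists>n. \<forall>y\<in>sigma N. (\<forall>k<n. z i k = y k) \<longrightarrow> (\<forall>k<1. T (z i) k = T y k)"
    using assms(1) assms(2)[THEN conjunct1] unfolding shift_continuous_iff_prefix by blast
  then obtain len where len:
    "\<forall>i\<in>{1..N}. \<forall>y\<in>sigma N. (\<forall>k<len i. z i k = y k) \<longrightarrow> (\<forall>k<1. T (z i) k = T y k)"
    by (rule bchoice[THEN exE]) blast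
  define K where "K = Suc (\<Sum>i\<in>{1..N}. len i)"
  have "T y 0 = y 0" if "y \<in> sigma N" "matches_pattern z K y" for y
  proof -
    have i: "y 0 \<in> {1..N}"
      using that(1) unfolding sigma_def by blast
    then have "len (y 0) < K"
      unfolding K_def by (simp add: le_imp_less_Suc member_le_sum)
    have "\<forall>k<len (y 0). z (y 0) k = y k"
    proof (intro allI impI)
      fix k assume "k < len (y 0)"
      then have "k \<le> K"
        using \<open>len (y 0) < K\<close> by simp
      with that(2) show "z (y 0) k = y k"
        unfolding matches_pattern_def by (metis (no_types))
    qed
    then have "T (z (y 0)) 0 = T y 0"
      using len i that(1) by blast
    then show ?thesis
      using assms(2)[OF i] by simp
  qed
  then show ?thesis
    unfolding K_def by blast
qed

theorem lemma3p1:
  fixes N :: nat and T :: "(nat \<Rightarrow> nat) \<Rightarrow> (nat \<Rightarrow> nat)"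
  assumes "N \<ge> 1"
    and "T ` sigma N = sigma N"
    and "shift_continuous N T"
    and "\<forall>i\<in>{1..N}. \<exists>x\<in>cyl N i. T x \<in> cyl N i"
  shows "\<exists>T'. T' ` sigma N = sigma N \<and> shift_continuous N T'
    \<and> (\<forall>x\<in>sigma N. \<forall>i. T' x \<in> cyl N i \<longleftrightarrow> T x \<in> cyl N i)
    \<and> (\<forall>x\<in>sigma N. finally_periodic T' x)"
proof -
  have "\<exists>w. w 0 = i \<and> (i \<in> {1..N} \<longrightarrow> w \<in> sigma N \<and> T w 0 = i)" for i
  proof (cases "i \<in> {1..N}")
    case True
    then show ?thesis
      using assms(4) unfolding cyl_def by blast
  qed (intro exI[of _ "\<lambda>_. i"], auto)
  then obtain z where z0: "\<And>i. z i 0 = i"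
    and z: "\<And>i. i \<in> {1..N} \<Longrightarrow> z i \<in> sigma N \<and> T (z i) 0 = i"
    by metis
  obtain K where "K > 0" and K: "\<forall>y\<in>sigma N. matches_pattern z K y \<longrightarrow> T y 0 = y 0"
    using exists_pattern_length[OF assms(3)] z z0 by blast
  have T_sigma: "T x \<in> sigma N" if "x \<in> sigma N" for x
    using assms(2) that by blast
  have in_sigma: "pattern_map T z K x \<in> sigma N" if "x \<in> sigma N" for x
    using pattern_map_in_sigma that T_sigma z by blast
  have "pattern_map T z K ` sigma N = sigma N"
    using in_sigma sigma_subset_pattern_map_image[of K z N T] \<open>K > 0\<close> z0 z by blast
  moreover have "pattern_map T z K x \<in> cyl N i \<longleftrightarrow> T x \<in> cyl N i" if "x \<in> sigma N" for x i
    using that in_sigma T_sigma pattern_map_first_symbol[of N z K T x] K unfolding cyl_def by auto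
  ultimately show ?thesis
    using pattern_map_continuous[OF assms(3)] pattern_map_finally_periodic[of K z T] \<open>K > 0\<close> z0 by blast
qed

end
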